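(* If $X$ is a pseudocompact space and $G$ is an NSS group, then $C_p(X,G)$ is TAP.
   Context: All spaces are Tychonoff and non-empty; all topological groups are Hausdorff. $C_p(X,G)$ is the group of all continuous maps $X\to G$ with pointwise group operations and the topology of pointwise convergence. A topological group is NSS if some open neighborhood of the identity contains no nontrivial subgroup. A subset $A$ of a topological group $H$ is absolutely productive in $H$ if for every injection $a:\mathbb{N}\to A$ and every map $z:\mathbb{N}\to\mathbb{Z}$ the sequence $\left(\prod_{n=0}^{k}a(n)^{z(n)}\right)_{k\in\mathbb{N}}$ converges in $H$; $H$ is TAP if every absolutely productive subset of $H$ is finite. *)

theory Defs
  imports "HOL-Analysis.Analysis"
begin

definition tychonoff_space :: "'a topology \<Rightarrow> bool" where
  "tychonoff_space X \<longleftrightarrow> completely_regular_space X \<and> Hausdorff_space X"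

definition pseudocompact :: "'a topology \<Rightarrow> bool" where
  "pseudocompact X \<longleftrightarrow>
     (\<forall>f. continuous_map X euclideanreal f \<longrightarrow> bounded (f ` topspace X))"

section \<open>NSS groups (a Hausdorff topological group is a type of class
  topological_group_add + t2_space; group_add is not assumed commutative)\<close>

definition is_add_subgroup :: "'g::group_add set \<Rightarrow> bool" where
  "is_add_subgroup S \<longleftrightarrow> 0 \<in> S \<and> (\<forall>x\<in>S. \<forall>y\<in>S. x + y \<in> S) \<and> (\<forall>x\<in>S. - x \<in> S)"

definition NSS :: "'g::topological_group_add itself \<Rightarrow> bool" where
  "NSS _ \<longleftrightarrow> (\<exists>U::'g set. open U \<and> 0 \<in> U \<and>
      (\<forall>S. is_add_subgroup S \<and> S \<subseteq> U \<longrightarrow> S = {0}))"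

section \<open>Absolutely productive sets and TAP, for an abstract topological group
  given by its topology T (carrier = topspace T), multiplication, inverse, identity\<close>

definition gzpow :: "('h \<Rightarrow> 'h \<Rightarrow> 'h) \<Rightarrow> ('h \<Rightarrow> 'h) \<Rightarrow> 'h \<Rightarrow> 'h \<Rightarrow> int \<Rightarrow> 'h" where
  "gzpow mul ginv one x k =
     (if 0 \<le> k then ((\<lambda>y. mul y x) ^^ nat k) one
      else ((\<lambda>y. mul y (ginv x)) ^^ nat (- k)) one)"

fun partial_prod :: "('h \<Rightarrow> 'h \<Rightarrow> 'h) \<Rightarrow> ('h \<Rightarrow> 'h) \<Rightarrow> 'h \<Rightarrow> (nat \<Rightarrow> 'h) \<Rightarrow> (nat \<Rightarrow> int) \<Rightarrow> nat \<Rightarrow> 'h" where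
  "partial_prod mul ginv one a z 0 = gzpow mul ginv one (a 0) (z 0)"
| "partial_prod mul ginv one a z (Suc k) =
     mul (partial_prod mul ginv one a z k) (gzpow mul ginv one (a (Suc k)) (z (Suc k)))"

definition absolutely_productive ::
  "'h topology \<Rightarrow> ('h \<Rightarrow> 'h \<Rightarrow> 'h) \<Rightarrow> ('h \<Rightarrow> 'h) \<Rightarrow> 'h \<Rightarrow> 'h set \<Rightarrow> bool" where
  "absolutely_productive T mul ginv one A \<longleftrightarrow> A \<subseteq> topspace T \<and>
     (\<forall>a z. inj a \<and> range a \<subseteq> A \<longrightarrow>
        (\<exists>h. limitin T (partial_prod mul ginv one a z) h sequentially))"

definition TAP :: "'h topology \<Rightarrow> ('h \<Rightarrow> 'h \<Rightarrow> 'h) \<Rightarrow> ('h \<Rightarrow> 'h) \<Rightarrow> 'h \<Rightarrow> bool" where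
  "TAP T mul ginv one \<longleftrightarrow>
     (\<forall>A. A \<subseteq> topspace T \<and> absolutely_productive T mul ginv one A \<longrightarrow> finite A)"

section \<open>C_p(X,G): continuous maps X \<rightarrow> G (extensional outside topspace X),
  pointwise operations, topology of pointwise convergence (subspace of the product)\<close>

definition Cp_carrier :: "'a topology \<Rightarrow> ('a \<Rightarrow> 'g::topological_space) set" where
  "Cp_carrier X = {f. continuous_map X euclidean f \<and> f \<in> extensional (topspace X)}"

definition Cp_top :: "'a topology \<Rightarrow> ('a \<Rightarrow> 'g::topological_space) topology" where
  "Cp_top X = subtopology (product_topology (\<lambda>_. euclidean) (topspace X)) (Cp_carrier X)"

definition Cp_mul :: "'a topology \<Rightarrow> ('a \<Rightarrow> 'g::group_add) \<Rightarrow> ('a \<Rightarrow> 'g) \<Rightarrow> ('a \<Rightarrow> 'g)" where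
  "Cp_mul X f g = restrict (\<lambda>x. f x + g x) (topspace X)"

definition Cp_inv :: "'a topology \<Rightarrow> ('a \<Rightarrow> 'g::group_add) \<Rightarrow> ('a \<Rightarrow> 'g)" where
  "Cp_inv X f = restrict (\<lambda>x. - f x) (topspace X)"

definition Cp_one :: "'a topology \<Rightarrow> ('a \<Rightarrow> 'g::group_add)" where
  "Cp_one X = restrict (\<lambda>x. 0) (topspace X)"

end

theory Submission
  imports Defs
begin

text \<open>
  Suppose A is an infinite absolutely productive subset of C_p(X,G) and pick an injective sequence
  a_n in A different from 0; every series of integer multiples of the a_n converges pointwise to a
  continuous function. Fix a neighbourhood U of 0 containing no nontrivial subgroup. Then some
  multiple of every nonzero element leaves U, so at each point the a_n are eventually 0, and choosing
  multiples g_n = m_n a_n with g_n(y_n) outside U we get continuous functions, pointwise eventually 0,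
  none of them uniformly U-small, all of whose subseries converge to continuous functions.
  In a pseudocompact space every sequence of nonempty open sets has a cluster point; this yields
  indices j_k and nonempty open sets R_k on which all earlier partial subsums are small, g_(j_k) is
  close to its bad value and all later terms vanish. The subseries over {j_k} is 0 at a cluster
  point of the R_k, hence small at some x in some R_k, and comparing it there with its partial sums
  puts the bad value g_(j_k)(y_(j_k)) into U.
\<close>

definition int_multiple :: "int \<Rightarrow> 'g::group_add \<Rightarrow> 'g" where
  "int_multiple k g = gzpow (+) uminus 0 g k"

lemma sum_list_replicate_Suc_right:
  "sum_list (replicate (Suc n) g) = sum_list (replicate n g) + (g::'g::monoid_add)"
  by (metis replicate_Suc replicate_append_same sum_list.append sum_list.Cons sum_list.Nil add_0_right)

lemma funpow_add_right_eq_sum_list: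
  "((\<lambda>y. y + g) ^^ n) 0 = sum_list (replicate n (g::'g::monoid_add))"
  by (induction n) (simp_all only: funpow.simps o_apply id_apply sum_list_replicate_Suc_right replicate_0 sum_list.Nil)

lemma int_multiple_eq:
  "int_multiple k g =
     (if 0 \<le> k then sum_list (replicate (nat k) g) else sum_list (replicate (nat (- k)) (- g)))"
  unfolding int_multiple_def gzpow_def funpow_add_right_eq_sum_list ..

lemma int_multiple_0 [simp]: "int_multiple 0 g = 0"
  by (simp add: int_multiple_eq)

lemma int_multiple_1 [simp]: "int_multiple 1 g = g"
  by (simp add: int_multiple_eq)

lemma int_multiple_zero [simp]: "int_multiple k (0::'g::group_add) = 0"
proof -
  have "sum_list (replicate n (0::'g)) = 0" for n
    by (induction n) simp_all
  then show ?thesis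
    by (simp add: int_multiple_eq)
qed

lemma int_multiple_add1: "int_multiple (k + 1) g = int_multiple k g + g"
proof (cases "0 \<le> k")
  case True
  then have "nat (k + 1) = Suc (nat k)" by simp
  then show ?thesis
    using True by (simp only: int_multiple_eq sum_list_replicate_Suc_right) simp
next
  case False
  define n where "n = nat (- k - 1)"
  have "int_multiple (k + 1) g = sum_list (replicate n (- g))"
    using False unfolding n_def by (cases "k = -1") (simp_all add: int_multiple_eq)
  moreover have "nat (- k) = Suc n"
    using False unfolding n_def by simp
  then have "int_multiple k g = sum_list (replicate n (- g)) + - g"
    using False by (simp del: replicate_Suc add: int_multiple_eq sum_list_replicate_Suc_right)
  ultimately show ?thesis
    by (simp add: add.assoc)
qed

lemma int_multiple_add: "int_multiple (k + l) g = int_multiple k g + int_multiple l g"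
proof (induction l rule: int_induct[where k = 0])
  case (step1 l)
  have "int_multiple (k + (l + 1)) g = int_multiple (k + l) g + g"
    using int_multiple_add1[of "k + l" g] by (simp add: add.assoc)
  then show ?case
    using step1 by (simp add: int_multiple_add1 add.assoc)
next
  case (step2 l)
  have "int_multiple (k + (l - 1)) g + g = int_multiple (k + l) g"
    using int_multiple_add1[of "k + (l - 1)" g] by simp
  moreover have "int_multiple (l - 1) g + g = int_multiple l g"
    using int_multiple_add1[of "l - 1" g] by simp
  ultimately have "int_multiple (k + (l - 1)) g + g = int_multiple k g + int_multiple (l - 1) g + g"
    using step2 by (simp add: add.assoc)
  then show ?case
    by simp
qed simp

lemma int_multiple_minus: "int_multiple (- k) g = - int_multiple k g"
  using int_multiple_add[of k "- k" g] by (simp add: minus_unique)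

lemma is_add_subgroup_range_int_multiple: "is_add_subgroup (range (\<lambda>k. int_multiple k g))"
proof -
  have "int_multiple k g + int_multiple l g \<in> range (\<lambda>k. int_multiple k g)" for k l
    unfolding int_multiple_add[symmetric] by (rule rangeI)
  moreover have "- int_multiple k g \<in> range (\<lambda>k. int_multiple k g)" for k
    unfolding int_multiple_minus[symmetric] by (rule rangeI)
  moreover have "0 \<in> range (\<lambda>k. int_multiple k g)"
    unfolding int_multiple_0[symmetric, of g] by (rule rangeI)
  ultimately show ?thesis
    unfolding is_add_subgroup_def by blast
qed

lemma no_small_subgroup_imp_int_multiple_notin:
  assumes "\<forall>S. is_add_subgroup S \<and> S \<subseteq> U \<longrightarrow> S = {0}" and "g \<noteq> 0"
  shows "\<exists>k. int_multiple k g \<notin> U"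
proof (rule ccontr)
  assume "\<nexists>k. int_multiple k g \<notin> U"
  then have "range (\<lambda>k. int_multiple k g) \<subseteq> U"
    by blast
  then have "range (\<lambda>k. int_multiple k g) = {0}"
    using assms(1) is_add_subgroup_range_int_multiple by blast
  then show False
    using assms(2) int_multiple_1 by (metis rangeI singletonD)
qed

lemma continuous_on_sum_list_replicate:
  fixes f :: "'b::topological_space \<Rightarrow> 'g::topological_monoid_add"
  shows "continuous_on S f \<Longrightarrow> continuous_on S (\<lambda>x. sum_list (replicate n (f x)))"
proof (induction n)
  case (Suc n)
  then show ?case
    unfolding sum_list_replicate_Suc_right by (intro continuous_on_add) simp_all
qed simp

lemma continuous_on_int_multiple: "continuous_on S (int_multiple k :: 'g::topological_group_add \<Rightarrow> 'g)"
  unfolding int_multiple_eq[abs_def]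
  by (cases "0 \<le> k") (simp_all add: continuous_on_sum_list_replicate[OF continuous_on_id]
      continuous_on_sum_list_replicate[OF continuous_on_minus[OF continuous_on_id]])

lemma continuous_map_int_multiple:
  fixes f :: "'a \<Rightarrow> 'g::topological_group_add"
  assumes "continuous_map X euclidean f"
  shows "continuous_map X euclidean (\<lambda>x. int_multiple k (f x))"
proof -
  have "continuous_map euclidean euclidean (int_multiple k :: 'g \<Rightarrow> 'g)"
    by (simp add: continuous_on_int_multiple)
  with continuous_map_compose[OF assms] show ?thesis
    by (simp only: o_def)
qed

lemma sum_list_upt_eq_zero:
  "(\<And>i. i < n \<Longrightarrow> w i = 0) \<Longrightarrow> (\<Sum>i\<leftarrow>[0..<n]. w i) = (0::'g::monoid_add)"
  by (induction n) simp_all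

lemma sum_list_upt_cong:
  "(\<And>i. i < n \<Longrightarrow> w i = w' i) \<Longrightarrow> (\<Sum>i\<leftarrow>[0..<n]. w i) = (\<Sum>i\<leftarrow>[0..<n]. w' i :: 'g::monoid_add)"
  by (induction n) simp_all

lemma sum_list_upt_eq_if_zero_between:
  assumes "m \<le> n" and "\<And>i. m \<le> i \<Longrightarrow> i < n \<Longrightarrow> w i = 0"
  shows "(\<Sum>i\<leftarrow>[0..<n]. w i) = (\<Sum>i\<leftarrow>[0..<m]. w i :: 'g::monoid_add)"
  using assms by (induction n rule: dec_induct) simp_all

lemma continuous_map_add_monoid:
  fixes f g :: "'a \<Rightarrow> 'g::topological_monoid_add"
  assumes "continuous_map X euclidean f" "continuous_map X euclidean g"
  shows "continuous_map X euclidean (\<lambda>x. f x + g x)"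
  using assms by (simp add: continuous_map_atin tendsto_add)

lemma continuous_map_sum_list_upt:
  fixes w :: "nat \<Rightarrow> 'a \<Rightarrow> 'g::topological_monoid_add"
  assumes "\<And>i. i < n \<Longrightarrow> continuous_map X euclidean (w i)"
  shows "continuous_map X euclidean (\<lambda>x. \<Sum>i\<leftarrow>[0..<n]. w i x)"
  using assms
proof (induction n)
  case (Suc n)
  then show ?case
    by (simp add: continuous_map_add_monoid)
qed simp

lemma partial_prod_add_eq_sum_list:
  "partial_prod (+) uminus 0 a z n = (\<Sum>i\<leftarrow>[0..<Suc n]. int_multiple (z i) (a i))"
  by (induction n) (simp_all add: int_multiple_def add.assoc)

lemma partial_sums_convergent_imp_LIMSEQ_zero:
  fixes w :: "nat \<Rightarrow> 'g::topological_group_add"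
  assumes "(\<lambda>n. \<Sum>i\<leftarrow>[0..<n]. w i) \<longlonglongrightarrow> s"
  shows "w \<longlonglongrightarrow> 0"
proof -
  have "(\<lambda>n. - (\<Sum>i\<leftarrow>[0..<n]. w i) + (\<Sum>i\<leftarrow>[0..<Suc n]. w i)) \<longlonglongrightarrow> - s + s"
    by (intro tendsto_add tendsto_minus assms LIMSEQ_Suc)
  then show ?thesis
    by (simp add: add.assoc[symmetric])
qed

lemma NSS_multiples_summable_imp_eventually_zero:
  fixes c :: "nat \<Rightarrow> 'g::topological_group_add" and U :: "'g set"
  assumes U: "open U" "0 \<in> U" "\<forall>S. is_add_subgroup S \<and> S \<subseteq> U \<longrightarrow> S = {0}"
    and summable: "\<And>z. \<exists>s. (\<lambda>n. \<Sum>i\<leftarrow>[0..<n]. int_multiple (z i) (c i)) \<longlonglongrightarrow> s"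
  shows "\<exists>N. \<forall>n\<ge>N. c n = 0"
proof -
  have "\<forall>n. \<exists>k. c n \<noteq> 0 \<longrightarrow> int_multiple k (c n) \<notin> U"
    using no_small_subgroup_imp_int_multiple_notin[OF U(3)] by blast
  then obtain z where z: "\<And>n. c n \<noteq> 0 \<Longrightarrow> int_multiple (z n) (c n) \<notin> U"
    by metis
  obtain s where "(\<lambda>n. \<Sum>i\<leftarrow>[0..<n]. int_multiple (z i) (c i)) \<longlonglongrightarrow> s"
    using summable by blast
  then have "(\<lambda>n. int_multiple (z n) (c n)) \<longlonglongrightarrow> 0"
    by (rule partial_sums_convergent_imp_LIMSEQ_zero)
  then have "eventually (\<lambda>n. int_multiple (z n) (c n) \<in> U) sequentially"
    using U(1,2) by (rule topological_tendstoD)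
  then show ?thesis
    unfolding eventually_sequentially using z by blast
qed

lemma nhds_zero_neg_add_neg_subset:
  fixes U :: "'g::topological_group_add set"
  assumes "open U" "0 \<in> U"
  obtains V where "open V" "0 \<in> V" "\<And>a s w. a \<in> V \<Longrightarrow> s \<in> V \<Longrightarrow> w \<in> V \<Longrightarrow> - a + s + - w \<in> U"
proof -
  let ?T = "(\<lambda>(a, s, w). - a + s + - w) -` U"
  have "open ?T"
    using assms(1) by (intro open_vimage) (auto simp: case_prod_beta intro!: continuous_intros)
  moreover have "(0, 0, 0) \<in> ?T"
    using assms(2) by simp
  ultimately obtain V1 V23 where V1: "open V1" "0 \<in> V1" and V23: "open V23" "(0, 0) \<in> V23"
    and sub1: "V1 \<times> V23 \<subseteq> ?T"
    by (metis mem_Sigma_iff open_prod_elim)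
  obtain V2 V3 where V2: "open V2" "0 \<in> V2" and V3: "open V3" "0 \<in> V3" and sub23: "V2 \<times> V3 \<subseteq> V23"
    using V23 by (metis mem_Sigma_iff open_prod_elim)
  show ?thesis
  proof (rule that[of "V1 \<inter> V2 \<inter> V3"])
    fix a s w assume "a \<in> V1 \<inter> V2 \<inter> V3" "s \<in> V1 \<inter> V2 \<inter> V3" "w \<in> V1 \<inter> V2 \<inter> V3"
    then have "(a, s, w) \<in> V1 \<times> V23"
      using sub23 by blast
    then show "- a + s + - w \<in> U"
      using sub1 by auto
  qed (use V1 V2 V3 in auto)
qed

lemma interlaced_strict_mono:
  fixes b j :: "nat \<Rightarrow> nat"
  assumes "\<And>k. b k \<le> j k" "\<And>k. j k < b (Suc k)"
  shows "strict_mono b \<and> strict_mono j"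
proof -
  have "b k < b (Suc k)" "j k < j (Suc k)" for k
    using assms(1,2)[of k] assms(1)[of "Suc k"] by linarith+
  then show ?thesis
    by (simp add: strict_mono_Suc_iff)
qed

lemma interlaced_subseries_tendsto:
  fixes w :: "nat \<Rightarrow> 'g::topological_monoid_add"
  assumes bj: "\<And>k. b k \<le> j k" "\<And>k. j k < b (Suc k)" and "K \<le> k"
    and vanish: "\<And>n. b (Suc k) \<le> n \<Longrightarrow> w n = 0"
  shows "(\<lambda>n. \<Sum>i\<leftarrow>[0..<n]. if i \<in> j ` {K..} then w i else 0) \<longlonglongrightarrow>
    (\<Sum>i\<leftarrow>[0..<b k]. if i \<in> j ` {K..} then w i else 0) + w (j k)"
proof -
  define S where "S n = (\<Sum>i\<leftarrow>[0..<n]. if i \<in> j ` {K..} then w i else 0)" for n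
  have b_mono: "strict_mono b" and j_mono: "strict_mono j"
    using interlaced_strict_mono[of b j, OF bj(1,2)] by blast+
  have later: "b (Suc k) \<le> j k'" if "k < k'" for k'
    using strict_mono_less_eq[OF b_mono, of "Suc k" k'] bj(1)[of k'] that by simp
  have earlier: "j k' < b k" if "k' < k" for k'
    using strict_mono_less_eq[OF b_mono, of "Suc k'" k] bj(2)[of k'] that by simp
  have "S n = S (Suc (j k))" if "Suc (j k) \<le> n" for n
    unfolding S_def
  proof (rule sum_list_upt_eq_if_zero_between[OF that])
    fix i assume "Suc (j k) \<le> i"
    show "(if i \<in> j ` {K..} then w i else 0) = 0"
    proof (cases "i \<in> j ` {K..}")
      case True
      then obtain k' where "i = j k'"
        by blast
      then have "b (Suc k) \<le> i"
        using later \<open>Suc (j k) \<le> i\<close> strict_mono_less[OF j_mono, of k k'] by simp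
      then show ?thesis
        by (simp add: vanish)
    qed simp
  qed
  then have "eventually (\<lambda>n. S n = S (Suc (j k))) sequentially"
    unfolding eventually_sequentially by blast
  then have "S \<longlonglongrightarrow> S (Suc (j k))"
    by (rule tendsto_eventually)
  also have "S (Suc (j k)) = S (j k) + w (j k)"
    using \<open>K \<le> k\<close> by (simp add: S_def)
  also have "S (j k) = S (b k)"
    unfolding S_def
  proof (rule sum_list_upt_eq_if_zero_between[OF bj(1)])
    fix i assume "b k \<le> i" "i < j k"
    show "(if i \<in> j ` {K..} then w i else 0) = 0"
    proof (cases "i \<in> j ` {K..}")
      case True
      then obtain k' where "i = j k'"
        by blast
      then have "i < b k"
        using earlier \<open>i < j k\<close> strict_mono_less[OF j_mono, of k' k] by simp
      then show ?thesis
        using \<open>b k \<le> i\<close> by simp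
    qed simp
  qed
  finally show ?thesis
    unfolding S_def .
qed


definition cluster_point_of_sets :: "'a topology \<Rightarrow> 'a \<Rightarrow> (nat \<Rightarrow> 'a set) \<Rightarrow> bool" where
  "cluster_point_of_sets X p A \<longleftrightarrow>
     p \<in> topspace X \<and> (\<forall>W N. openin X W \<and> p \<in> W \<longrightarrow> (\<exists>n\<ge>N. W \<inter> A n \<noteq> {}))"

lemma regular_space_closure_of_subset_open:
  assumes "regular_space X" "openin X E" "y \<in> E"
  obtains W where "openin X W" "y \<in> W" "X closure_of W \<subseteq> E"
proof -
  have "closedin X (topspace X - E)" "y \<in> topspace X - (topspace X - E)"
    using assms(2,3) openin_subset by blast+
  then obtain W where W: "openin X W" "y \<in> W" "disjnt (topspace X - E) (X closure_of W)"
    using assms(1)[unfolded regular_space, rule_format, OF conjI] by blast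
  have "X closure_of W \<subseteq> E"
    using W(3) closure_of_subset_topspace[of X W] by (auto simp: disjnt_def)
  then show ?thesis
    by (rule that[OF W(1,2)])
qed

lemma continuous_map_suminf_locally_finite:
  fixes g :: "nat \<Rightarrow> 'a \<Rightarrow> real"
  assumes cont: "\<And>n. continuous_map X euclideanreal (g n)"
    and loc: "\<And>p. p \<in> topspace X \<Longrightarrow> \<exists>W N. openin X W \<and> p \<in> W \<and> (\<forall>n\<ge>N. \<forall>x\<in>W. g n x = 0)"
  shows "continuous_map X euclideanreal (\<lambda>x. \<Sum>n. g n x)"
  unfolding continuous_map_atin
proof
  fix p assume p: "p \<in> topspace X"
  obtain W N where W: "openin X W" "p \<in> W" and N: "\<And>n x. n \<ge> N \<Longrightarrow> x \<in> W \<Longrightarrow> g n x = 0"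
    using loc[OF p] by blast
  have local_sum: "(\<Sum>n. g n x) = (\<Sum>n<N. g n x)" if "x \<in> W" for x
    by (rule suminf_finite) (use N that in auto)
  have "continuous_map X euclideanreal (\<lambda>x. \<Sum>n<N. g n x)"
    by (intro continuous_map_sum cont) simp
  then have "limitin euclideanreal (\<lambda>x. \<Sum>n<N. g n x) (\<Sum>n<N. g n p) (atin X p)"
    using p unfolding continuous_map_atin by blast
  moreover have "eventually (\<lambda>x. (\<Sum>n<N. g n x) = (\<Sum>n. g n x)) (atin X p)"
    unfolding eventually_atin using W local_sum by auto
  ultimately have "limitin euclideanreal (\<lambda>x. \<Sum>n. g n x) (\<Sum>n<N. g n p) (atin X p)"
    by (rule limitin_transform_eventually[rotated])
  then show "limitin euclideanreal (\<lambda>x. \<Sum>n. g n x) (\<Sum>n. g n p) (atin X p)"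
    by (simp only: local_sum[OF W(2)])
qed

lemma completely_regular_space_bump:
  assumes "completely_regular_space X" "openin X A" "x \<in> A"
  obtains \<psi> where "continuous_map X euclideanreal \<psi>" "\<psi> x = 1"
    "\<And>y. y \<in> topspace X \<Longrightarrow> 0 \<le> \<psi> y" "\<And>y. y \<in> topspace X \<Longrightarrow> y \<notin> A \<Longrightarrow> \<psi> y = 0"
proof -
  have "closedin X (topspace X - A)" "x \<in> topspace X - (topspace X - A)"
    using assms(2,3) openin_subset by blast+
  then obtain \<phi> where \<phi>: "continuous_map X (top_of_set {0..1::real}) \<phi>" "\<phi> x = 0"
    "\<phi> ` (topspace X - A) \<subseteq> {1}"
    using assms(1)[unfolded completely_regular_space_def, rule_format, of "topspace X - A" x] by blast
  show ?thesis
  proof (rule that[of "\<lambda>y. 1 - \<phi> y"])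
    have "continuous_map X euclideanreal \<phi>"
      using \<phi>(1) by (simp add: continuous_map_in_subtopology)
    then show "continuous_map X euclideanreal (\<lambda>y. 1 - \<phi> y)"
      by (intro continuous_intros)
    show "0 \<le> 1 - \<phi> y" if "y \<in> topspace X" for y
      using continuous_map_image_subset_topspace[OF \<phi>(1)] that by auto
    show "1 - \<phi> y = 0" if "y \<in> topspace X" "y \<notin> A" for y
    proof -
      have "\<phi> y = 1"
        using \<phi>(3) that by blast
      then show ?thesis
        by simp
    qed
  qed (simp add: \<phi>(2))
qed

lemma pseudocompact_no_locally_finite_open_sequence:
  fixes A :: "nat \<Rightarrow> 'a set"
  assumes cr: "completely_regular_space X" and pc: "pseudocompact X"
    and A: "\<And>n. openin X (A n)" "\<And>n. A n \<noteq> {}"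
    and loc: "\<And>p. p \<in> topspace X \<Longrightarrow> \<exists>W N. openin X W \<and> p \<in> W \<and> (\<forall>n\<ge>N. \<forall>y\<in>W. y \<notin> A n)"
  shows False
proof -
  have "\<forall>n. \<exists>x \<psi>. x \<in> A n \<and> continuous_map X euclideanreal \<psi> \<and> \<psi> x = 1 \<and>
      (\<forall>y\<in>topspace X. 0 \<le> \<psi> y \<and> (y \<notin> A n \<longrightarrow> \<psi> y = 0))"
  proof
    fix n
    obtain x where "x \<in> A n"
      using A(2) by blast
    then show "\<exists>x \<psi>. x \<in> A n \<and> continuous_map X euclideanreal \<psi> \<and> \<psi> x = 1 \<and>
        (\<forall>y\<in>topspace X. 0 \<le> \<psi> y \<and> (y \<notin> A n \<longrightarrow> \<psi> y = 0))"
      by (metis completely_regular_space_bump[OF cr A(1)])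
  qed
  then obtain x \<psi> where x: "\<And>n. x n \<in> A n" and \<psi>: "\<And>n. continuous_map X euclideanreal (\<psi> n)"
    "\<And>n. \<psi> n (x n) = 1" "\<And>n y. y \<in> topspace X \<Longrightarrow> 0 \<le> \<psi> n y"
    "\<And>n y. y \<in> topspace X \<Longrightarrow> y \<notin> A n \<Longrightarrow> \<psi> n y = 0"
    unfolding choice_iff by (elim exE) blast
  have xX: "x n \<in> topspace X" for n
    using x A(1) openin_subset by blast
  \<comment> \<open>Bumps of height n supported in A n form a locally finite family, so their sum is continuous but unbounded.\<close>
  define F where "F y = (\<Sum>n. real n * \<psi> n y)" for y
  have "continuous_map X euclideanreal F"
    unfolding F_def
  proof (rule continuous_map_suminf_locally_finite)
    show "continuous_map X euclideanreal (\<lambda>y. real n * \<psi> n y)" for n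
      using \<psi>(1) by (intro continuous_intros)
    fix p assume "p \<in> topspace X"
    obtain W N where W: "openin X W" "p \<in> W" "\<forall>n\<ge>N. \<forall>y\<in>W. y \<notin> A n"
      using loc[OF \<open>p \<in> topspace X\<close>] by (elim exE conjE)
    have "real n * \<psi> n y = 0" if "N \<le> n" "y \<in> W" for n y
    proof -
      have "y \<in> topspace X" "y \<notin> A n"
        using W(1,3) openin_subset that by blast+
      then show ?thesis
        by (simp add: \<psi>(4))
    qed
    with W show "\<exists>W N. openin X W \<and> p \<in> W \<and> (\<forall>n\<ge>N. \<forall>y\<in>W. real n * \<psi> n y = 0)"
      by blast
  qed
  then have "bounded (F ` topspace X)"
    using pc by (simp add: pseudocompact_def)
  then obtain B where B: "\<And>y. y \<in> topspace X \<Longrightarrow> \<bar>F y\<bar> \<le> B"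
    unfolding bounded_iff by auto
  obtain m :: nat where m: "B < real m"
    using reals_Archimedean2 by blast
  obtain W N where W: "openin X W" "x m \<in> W" "\<forall>n\<ge>N. \<forall>y\<in>W. y \<notin> A n"
    using loc[OF xX[of m]] by (elim exE conjE)
  have "m < N"
    using W(2,3) x[of m] not_le by blast
  have "F (x m) = (\<Sum>n<N. real n * \<psi> n (x m))"
    unfolding F_def by (rule suminf_finite) (use W(2,3) \<psi>(4) xX in auto)
  also have "\<dots> \<ge> real m * \<psi> m (x m)"
    by (rule member_le_sum) (use \<open>m < N\<close> \<psi>(3) xX in auto)
  finally have "real m \<le> F (x m)"
    by (simp add: \<psi>(2))
  then show False
    using B[OF xX[of m]] m by linarith
qed

lemma pseudocompact_cluster_point_exists:
  assumes cr: "completely_regular_space X" and pc: "pseudocompact X"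
    and A: "\<And>n. openin X (A n)" "\<And>n. A n \<noteq> {}"
  shows "\<exists>p. cluster_point_of_sets X p A"
proof (rule ccontr)
  assume no_cluster: "\<nexists>p. cluster_point_of_sets X p A"
  show False
  proof (rule pseudocompact_no_locally_finite_open_sequence[OF cr pc A])
    fix p assume p: "p \<in> topspace X"
    have "\<not> cluster_point_of_sets X p A"
      using no_cluster by blast
    then obtain W N where "openin X W" "p \<in> W" "\<forall>n\<ge>N. W \<inter> A n = {}"
      using p unfolding cluster_point_of_sets_def by auto
    then show "\<exists>W N. openin X W \<and> p \<in> W \<and> (\<forall>n\<ge>N. \<forall>y\<in>W. y \<notin> A n)"
      by (intro exI[of _ W] exI[of _ N]) (auto simp: disjoint_iff)
  qed
qed

lemma pseudocompact_nested_opens_common_point: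
  assumes cr: "completely_regular_space X" and pc: "pseudocompact X"
    and A: "\<And>n. openin X (A n)" "\<And>n. A n \<noteq> {}" "\<And>n. X closure_of A (Suc n) \<subseteq> A n"
  shows "\<exists>p\<in>topspace X. \<forall>n. p \<in> A n"
proof -
  obtain p where p: "cluster_point_of_sets X p A"
    using pseudocompact_cluster_point_exists[of X A] cr pc A(1,2) by blast
  have "A (Suc n) \<subseteq> A n" for n
    using closure_of_subset[OF openin_subset[OF A(1)]] A(3) by blast
  then have "decseq A"
    by (rule decseq_SucI)
  have "p \<in> X closure_of A (Suc n)" for n
    unfolding in_closure_of
    using p decseqD[OF \<open>decseq A\<close>] unfolding cluster_point_of_sets_def by blast
  then show ?thesis
    using p A(3) unfolding cluster_point_of_sets_def by blast
qed

lemma regular_space_nonzero_nbhd: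
  fixes f :: "'a \<Rightarrow> 'g::{t1_space,zero}"
  assumes "regular_space X" "continuous_map X euclidean f" "openin X A" "y \<in> A" "f y \<noteq> 0"
  obtains W where "openin X W" "y \<in> W" "X closure_of W \<subseteq> A" "\<And>x. x \<in> W \<Longrightarrow> f x \<noteq> 0"
proof -
  define E where "E = A \<inter> {x \<in> topspace X. f x \<in> - {0}}"
  have "openin X {x \<in> topspace X. f x \<in> - {0}}"
    by (rule openin_continuous_map_preimage[OF assms(2)]) (simp add: open_Compl)
  then have E_open: "openin X E"
    unfolding E_def using assms(3) by blast
  have yE: "y \<in> E"
    unfolding E_def using assms(3-5) openin_subset by blast
  obtain W where W: "openin X W" "y \<in> W" "X closure_of W \<subseteq> E"
    using assms(1) E_open yE by (rule regular_space_closure_of_subset_open)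
  have "W \<subseteq> E"
    using closure_of_subset[OF openin_subset[OF W(1)]] W(3) by blast
  show ?thesis
    by (rule that[OF W(1,2)]) (use W(3) \<open>W \<subseteq> E\<close> in \<open>auto simp: E_def\<close>)
qed

lemma pseudocompact_eventually_zero_on_open:
  fixes f :: "nat \<Rightarrow> 'a \<Rightarrow> 'g::{t1_space,zero}"
  assumes cr: "completely_regular_space X" and pc: "pseudocompact X"
    and cont: "\<And>n. continuous_map X euclidean (f n)"
    and ev: "\<And>x. x \<in> topspace X \<Longrightarrow> \<exists>N. \<forall>n\<ge>N. f n x = 0"
    and R: "openin X R" "R \<noteq> {}"
  shows "\<exists>R' N. openin X R' \<and> R' \<noteq> {} \<and> R' \<subseteq> R \<and> (\<forall>n\<ge>N. \<forall>x\<in>R'. f n x = 0)"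
proof (rule ccontr)
  assume no: "\<not> ?thesis"
  let ?P = "\<lambda>k A. openin X A \<and> A \<noteq> {} \<and> A \<subseteq> R"
  let ?Q = "\<lambda>k A A'. X closure_of A' \<subseteq> A \<and> (\<forall>x\<in>A'. \<exists>n\<ge>k. f n x \<noteq> 0)"
  have step: "\<exists>A'. ?P (Suc k) A' \<and> ?Q k A A'" if A: "?P k A" for k A
  proof -
    have "\<exists>n\<ge>k. \<exists>y\<in>A. f n y \<noteq> 0"
    proof (rule ccontr)
      assume "\<not> (\<exists>n\<ge>k. \<exists>y\<in>A. f n y \<noteq> 0)"
      then have "openin X A \<and> A \<noteq> {} \<and> A \<subseteq> R \<and> (\<forall>n\<ge>k. \<forall>x\<in>A. f n x = 0)"
        using A by blast
      then show False
        using no by blast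
    qed
    then obtain n y where ny: "k \<le> n" "y \<in> A" "f n y \<noteq> 0"
      by blast
    have "openin X A"
      using A by blast
    obtain W where W: "openin X W" "y \<in> W" "X closure_of W \<subseteq> A" "\<And>x. x \<in> W \<Longrightarrow> f n x \<noteq> 0"
      using completely_regular_imp_regular_space[OF cr] cont[of n] \<open>openin X A\<close> ny(2,3)
      by (rule regular_space_nonzero_nbhd) (rule that)
    have "W \<subseteq> A"
      using closure_of_subset[OF openin_subset[OF W(1)]] W(3) by blast
    then have "W \<subseteq> R" "\<forall>x\<in>W. \<exists>n\<ge>k. f n x \<noteq> 0"
      using A W(4) ny(1) by auto
    moreover have "W \<noteq> {}"
      using W(2) by blast
    ultimately show ?thesis
      using W(1,3) by (intro exI[of _ W]) simp
  qed
  have "\<exists>A. \<forall>k. ?P k (A k) \<and> ?Q k (A k) (A (Suc k))"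
  proof (rule dependent_nat_choice)
    show "\<exists>A. ?P 0 A"
      using R by blast
  next
    fix A k assume "?P k A"
    then show "\<exists>A'. ?P (Suc k) A' \<and> ?Q k A A'"
      by (rule step)
  qed
  then obtain A where A: "\<And>k. ?P k (A k)" "\<And>k. ?Q k (A k) (A (Suc k))"
    by blast
  have "\<exists>p\<in>topspace X. \<forall>k. p \<in> A k"
    using A by (intro pseudocompact_nested_opens_common_point[OF cr pc]) blast+
  then obtain p where p: "p \<in> topspace X" "\<And>k. p \<in> A k"
    by blast
  obtain N where "\<forall>n\<ge>N. f n p = 0"
    using ev[OF p(1)] by blast
  moreover have "\<exists>n\<ge>N. f n p \<noteq> 0"
    using A(2)[of N] p(2)[of "Suc N"] by blast
  ultimately show False
    by blast
qed

lemma pseudocompact_block_sequence: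
  fixes f :: "nat \<Rightarrow> 'a \<Rightarrow> 'g::{t1_space,zero}"
  assumes cr: "completely_regular_space X" and pc: "pseudocompact X"
    and cont: "\<And>n. continuous_map X euclidean (f n)"
    and ev: "\<And>x. x \<in> topspace X \<Longrightarrow> \<exists>N. \<forall>n\<ge>N. f n x = 0"
    and Op: "\<And>n. openin X (Op n)" and p: "cluster_point_of_sets X p Op"
    and Y: "\<And>B. openin X (Y B)" "\<And>B. p \<in> Y B"
  obtains b j R where "\<And>k. m \<le> b k" "\<And>k. b k \<le> j k" "\<And>k. j k < b (Suc k)"
    "\<And>k. openin X (R k)" "\<And>k. R k \<noteq> {}" "\<And>k. R k \<subseteq> Y (b k)" "\<And>k. R k \<subseteq> Op (j k)"
    "\<And>k n x. b (Suc k) \<le> n \<Longrightarrow> x \<in> R k \<Longrightarrow> f n x = 0"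
proof -
  have "\<forall>B. \<exists>j R N. B \<le> j \<and> j < N \<and> openin X R \<and> R \<noteq> {} \<and> R \<subseteq> Y B \<and> R \<subseteq> Op j \<and> (\<forall>n\<ge>N. \<forall>x\<in>R. f n x = 0)"
  proof
    fix B
    obtain j where j: "B \<le> j" "Y B \<inter> Op j \<noteq> {}"
      using p Y(1,2)[of B] unfolding cluster_point_of_sets_def by blast
    have YOp: "openin X (Y B \<inter> Op j)"
      using Y(1) Op by blast
    have "\<exists>R N. openin X R \<and> R \<noteq> {} \<and> R \<subseteq> Y B \<inter> Op j \<and> (\<forall>n\<ge>N. \<forall>x\<in>R. f n x = 0)"
      by (rule pseudocompact_eventually_zero_on_open[OF cr pc cont ev YOp j(2)])
    then obtain R N where "openin X R" "R \<noteq> {}" "R \<subseteq> Y B \<inter> Op j" "\<forall>n\<ge>N. \<forall>x\<in>R. f n x = 0"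
      by (elim exE conjE)
    then show "\<exists>j R N. B \<le> j \<and> j < N \<and> openin X R \<and> R \<noteq> {} \<and> R \<subseteq> Y B \<and> R \<subseteq> Op j
        \<and> (\<forall>n\<ge>N. \<forall>x\<in>R. f n x = 0)"
      using j(1) by (intro exI[of _ j] exI[of _ R] exI[of _ "max N (Suc j)"]) simp
  qed
  then have "\<exists>J RR N. \<forall>B. B \<le> J B \<and> J B < N B \<and> openin X (RR B) \<and> RR B \<noteq> {}
      \<and> RR B \<subseteq> Y B \<and> RR B \<subseteq> Op (J B) \<and> (\<forall>n\<ge>N B. \<forall>x\<in>RR B. f n x = 0)"
    by (simp only: choice_iff)
  then obtain J RR N where JRN_all: "\<forall>B. B \<le> J B \<and> J B < N B \<and> openin X (RR B) \<and> RR B \<noteq> {}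
      \<and> RR B \<subseteq> Y B \<and> RR B \<subseteq> Op (J B) \<and> (\<forall>n\<ge>N B. \<forall>x\<in>RR B. f n x = 0)"
    by (elim exE)
  then have JRN: "\<And>B. B \<le> J B" "\<And>B. J B < N B" "\<And>B. openin X (RR B)" "\<And>B. RR B \<noteq> {}"
    "\<And>B. RR B \<subseteq> Y B" "\<And>B. RR B \<subseteq> Op (J B)" "\<And>B n x. N B \<le> n \<Longrightarrow> x \<in> RR B \<Longrightarrow> f n x = 0"
    by simp_all
  define b where "b k = (N ^^ k) m" for k
  have b_Suc: "b (Suc k) = N (b k)" for k
    by (simp add: b_def)
  have "m \<le> b k" for k
  proof (induction k)
    case (Suc k)
    then show ?case
      using JRN(1,2)[of "b k"] b_Suc[of k] by linarith
  qed (simp add: b_def)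
  then show ?thesis
    by (rule that[of b "\<lambda>k. J (b k)" "\<lambda>k. RR (b k)"]) (simp_all add: JRN b_Suc)
qed

lemma openin_partial_subsums_in:
  fixes g :: "nat \<Rightarrow> 'a \<Rightarrow> 'g::topological_monoid_add"
  assumes cont: "\<And>n. continuous_map X euclidean (g n)" and "open V"
  shows "openin X {x \<in> topspace X. \<forall>F \<subseteq> {m..<B}. (\<Sum>i\<leftarrow>[0..<B]. if i \<in> F then g i x else 0) \<in> V}"
proof -
  have "continuous_map X euclidean (\<lambda>x. \<Sum>i\<leftarrow>[0..<B]. if i \<in> F then g i x else 0)" for F
  proof (rule continuous_map_sum_list_upt)
    fix i show "continuous_map X euclidean (\<lambda>x. if i \<in> F then g i x else 0)"
      by (cases "i \<in> F") (simp_all add: cont)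
  qed
  then have "openin X {x \<in> topspace X. (\<Sum>i\<leftarrow>[0..<B]. if i \<in> F then g i x else 0) \<in> V}" for F
    by (rule openin_continuous_map_preimage) (simp add: \<open>open V\<close>)
  then have "openin X ((\<Inter>F \<in> Pow {m..<B}. {x \<in> topspace X. (\<Sum>i\<leftarrow>[0..<B]. if i \<in> F then g i x else 0) \<in> V})
      \<inter> topspace X)"
    by (simp add: openin_INT)
  moreover have "(\<Inter>F \<in> Pow {m..<B}. {x \<in> topspace X. (\<Sum>i\<leftarrow>[0..<B]. if i \<in> F then g i x else 0) \<in> V})
      \<inter> topspace X = {x \<in> topspace X. \<forall>F \<subseteq> {m..<B}. (\<Sum>i\<leftarrow>[0..<B]. if i \<in> F then g i x else 0) \<in> V}"
    by auto
  ultimately show ?thesis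
    by simp
qed

lemma pseudocompact_subseries_small_on_block:
  fixes g :: "nat \<Rightarrow> 'a \<Rightarrow> 'g::{topological_group_add,t2_space}"
  assumes cr: "completely_regular_space X" and pc: "pseudocompact X"
    and ev: "\<And>x. x \<in> topspace X \<Longrightarrow> \<exists>N. \<forall>n\<ge>N. g n x = 0"
    and subseries: "\<And>J. \<exists>h. continuous_map X euclidean h \<and>
        (\<forall>x\<in>topspace X. (\<lambda>n. \<Sum>i\<leftarrow>[0..<n]. if i \<in> J then g i x else 0) \<longlonglongrightarrow> h x)"
    and bj: "\<And>k. b k \<le> j k" "\<And>k. j k < b (Suc k)"
    and R: "\<And>k. openin X (R k)" "\<And>k. R k \<noteq> {}"
    and R_vanish: "\<And>k n x. b (Suc k) \<le> n \<Longrightarrow> x \<in> R k \<Longrightarrow> g n x = 0"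
    and V: "open V" "0 \<in> V"
  shows "\<exists>k F. \<exists>x\<in>R k. F \<subseteq> range j \<inter> {..<b k} \<and>
    (\<Sum>i\<leftarrow>[0..<b k]. if i \<in> F then g i x else 0) + g (j k) x \<in> V"
proof -
  have "\<exists>q. cluster_point_of_sets X q R"
    by (rule pseudocompact_cluster_point_exists[OF cr pc R])
  then obtain q where q: "cluster_point_of_sets X q R"
    by (elim exE)
  then have qX: "q \<in> topspace X"
    by (simp add: cluster_point_of_sets_def)
  obtain K where K: "\<forall>n\<ge>K. g n q = 0"
    using ev[OF qX] by (elim exE)
  define J where "J = j ` {K..}"
  obtain h where h: "continuous_map X euclidean h"
    "\<And>x. x \<in> topspace X \<Longrightarrow> (\<lambda>n. \<Sum>i\<leftarrow>[0..<n]. if i \<in> J then g i x else 0) \<longlonglongrightarrow> h x"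
    using subseries[of J] by blast
  have "(if i \<in> J then g i q else 0) = 0" for i
  proof (cases "i \<in> J")
    case True
    then obtain k where "K \<le> k" "i = j k"
      unfolding J_def by blast
    moreover have "k \<le> j k"
      using strict_mono_imp_increasing interlaced_strict_mono[of b j, OF bj] by blast
    ultimately show ?thesis
      using K by simp
  qed simp
  then have "(\<Sum>i\<leftarrow>[0..<n]. if i \<in> J then g i q else 0) = 0" for n
    by (simp add: sum_list_upt_eq_zero)
  then have "h q = 0"
    using LIMSEQ_unique[OF h(2)[OF qX]] by simp
  have "openin X {x \<in> topspace X. h x \<in> V}"
    by (rule openin_continuous_map_preimage[OF h(1)]) (simp add: V(1))
  moreover have "q \<in> {x \<in> topspace X. h x \<in> V}"
    using \<open>h q = 0\<close> V(2) qX by simp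
  ultimately obtain k where k: "K \<le> k" "{x \<in> topspace X. h x \<in> V} \<inter> R k \<noteq> {}"
    using q unfolding cluster_point_of_sets_def by blast
  then obtain x where x: "x \<in> topspace X" "h x \<in> V" "x \<in> R k"
    by blast
  have "(\<lambda>n. \<Sum>i\<leftarrow>[0..<n]. if i \<in> J then g i x else 0) \<longlonglongrightarrow>
      (\<Sum>i\<leftarrow>[0..<b k]. if i \<in> J then g i x else 0) + g (j k) x"
    unfolding J_def by (rule interlaced_subseries_tendsto[of b j, OF bj k(1)]) (use R_vanish x(3) in blast)
  then have "h x = (\<Sum>i\<leftarrow>[0..<b k]. if i \<in> J then g i x else 0) + g (j k) x"
    using LIMSEQ_unique[OF h(2)[OF x(1)]] by simp
  also have "(\<Sum>i\<leftarrow>[0..<b k]. if i \<in> J then g i x else 0) =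
      (\<Sum>i\<leftarrow>[0..<b k]. if i \<in> J \<inter> {..<b k} then g i x else 0)"
    by (rule sum_list_upt_cong) simp
  finally have "(\<Sum>i\<leftarrow>[0..<b k]. if i \<in> J \<inter> {..<b k} then g i x else 0) + g (j k) x \<in> V"
    using x(2) by simp
  moreover have "J \<inter> {..<b k} \<subseteq> range j \<inter> {..<b k}"
    unfolding J_def by blast
  ultimately show ?thesis
    using x(3) by blast
qed

lemma pseudocompact_subseries_convergent_imp_small_term:
  fixes g :: "nat \<Rightarrow> 'a \<Rightarrow> 'g::{topological_group_add,t2_space}" and U :: "'g set"
  assumes cr: "completely_regular_space X" and pc: "pseudocompact X"
    and cont: "\<And>n. continuous_map X euclidean (g n)"
    and ev: "\<And>x. x \<in> topspace X \<Longrightarrow> \<exists>N. \<forall>n\<ge>N. g n x = 0"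
    and subseries: "\<And>J. \<exists>h. continuous_map X euclidean h \<and>
        (\<forall>x\<in>topspace X. (\<lambda>n. \<Sum>i\<leftarrow>[0..<n]. if i \<in> J then g i x else 0) \<longlonglongrightarrow> h x)"
    and U: "open U" "0 \<in> U"
  shows "\<exists>n. \<forall>x\<in>topspace X. g n x \<in> U"
proof (rule ccontr)
  assume "\<nexists>n. \<forall>x\<in>topspace X. g n x \<in> U"
  then have "\<forall>n. \<exists>x. x \<in> topspace X \<and> g n x \<notin> U"
    by blast
  then obtain y where y: "\<forall>n. y n \<in> topspace X \<and> g n (y n) \<notin> U"
    unfolding choice_iff by (elim exE)
  obtain V where V: "open V" "0 \<in> V" "\<And>a s w. a \<in> V \<Longrightarrow> s \<in> V \<Longrightarrow> w \<in> V \<Longrightarrow> - a + s + - w \<in> U"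
    by (rule nhds_zero_neg_add_neg_subset[OF U]) (rule that)
  define Op where "Op n = {x \<in> topspace X. - g n (y n) + g n x \<in> V}" for n
  have Op_open: "openin X (Op n)" for n
  proof -
    have "continuous_map X euclidean (\<lambda>x. - g n (y n) + g n x)"
      by (rule continuous_map_add_monoid) (simp_all add: cont)
    then show ?thesis
      unfolding Op_def by (rule openin_continuous_map_preimage) (simp add: V(1))
  qed
  have "y n \<in> Op n" for n
    using y V(2) by (simp add: Op_def)
  then have "\<exists>p. cluster_point_of_sets X p Op"
    by (intro pseudocompact_cluster_point_exists[OF cr pc Op_open]) blast
  then obtain p where p: "cluster_point_of_sets X p Op"
    by (elim exE)
  then have pX: "p \<in> topspace X"
    by (simp add: cluster_point_of_sets_def)
  obtain m where m: "\<forall>n\<ge>m. g n p = 0"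
    using ev[OF pX] by (elim exE)
  define Y where "Y B = {x \<in> topspace X. \<forall>F \<subseteq> {m..<B}. (\<Sum>i\<leftarrow>[0..<B]. if i \<in> F then g i x else 0) \<in> V}" for B
  have Y_open: "openin X (Y B)" for B
    unfolding Y_def by (rule openin_partial_subsums_in[OF cont V(1)])
  have "(\<Sum>i\<leftarrow>[0..<B]. if i \<in> F then g i p else 0) = 0" if "F \<subseteq> {m..<B}" for B F
    by (rule sum_list_upt_eq_zero) (use that m in auto)
  then have p_Y: "p \<in> Y B" for B
    using pX V(2) unfolding Y_def by simp
  obtain b j R where bj: "\<And>k. m \<le> b k" "\<And>k. b k \<le> j k" "\<And>k. j k < b (Suc k)"
    and R: "\<And>k. openin X (R k)" "\<And>k. R k \<noteq> {}" "\<And>k. R k \<subseteq> Y (b k)" "\<And>k. R k \<subseteq> Op (j k)"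
    and R_vanish: "\<And>k n x. b (Suc k) \<le> n \<Longrightarrow> x \<in> R k \<Longrightarrow> g n x = 0"
    by (rule pseudocompact_block_sequence[where Y = Y and m = m, OF cr pc cont ev Op_open p Y_open p_Y])
      (assumption, rule that)
  have "\<exists>k F. \<exists>x\<in>R k. F \<subseteq> range j \<inter> {..<b k} \<and>
      (\<Sum>i\<leftarrow>[0..<b k]. if i \<in> F then g i x else 0) + g (j k) x \<in> V"
    by (rule pseudocompact_subseries_small_on_block[of X g b j R V, OF cr pc ev subseries bj(2,3) R(1,2) R_vanish V(1,2)])
  then obtain k F x where x: "x \<in> R k" and F: "F \<subseteq> range j \<inter> {..<b k}"
    and small: "(\<Sum>i\<leftarrow>[0..<b k]. if i \<in> F then g i x else 0) + g (j k) x \<in> V"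
    by (elim exE bexE conjE)
  have "F \<subseteq> {m..<b k}"
  proof
    fix i assume "i \<in> F"
    then obtain k' where "i = j k'" "i < b k"
      using F by blast
    then show "i \<in> {m..<b k}"
      using bj(1,2)[of k'] by simp
  qed
  then have "(\<Sum>i\<leftarrow>[0..<b k]. if i \<in> F then g i x else 0) \<in> V"
    using R(3)[of k] x unfolding Y_def by blast
  moreover have "- g (j k) (y (j k)) + g (j k) x \<in> V"
    using R(4)[of k] x unfolding Op_def by blast
  \<comment> \<open>The bad value is -s + (s + g (j k) x) + -(-g (j k) (y (j k)) + g (j k) x) with all three terms in V.\<close>
  ultimately have "- (\<Sum>i\<leftarrow>[0..<b k]. if i \<in> F then g i x else 0)
      + ((\<Sum>i\<leftarrow>[0..<b k]. if i \<in> F then g i x else 0) + g (j k) x)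
      + - (- g (j k) (y (j k)) + g (j k) x) \<in> U"
    using V(3) small by blast
  then have "g (j k) (y (j k)) \<in> U"
    by (simp add: add.assoc minus_add)
  then show False
    using y by blast
qed

lemma pseudocompact_NSS_summable_multiples_has_zero_term:
  fixes a :: "nat \<Rightarrow> 'a \<Rightarrow> 'g::{topological_group_add,t2_space}" and U :: "'g set"
  assumes cr: "completely_regular_space X" and pc: "pseudocompact X"
    and U: "open U" "0 \<in> U" "\<forall>S. is_add_subgroup S \<and> S \<subseteq> U \<longrightarrow> S = {0}"
    and cont: "\<And>n. continuous_map X euclidean (a n)"
    and summable: "\<And>z. \<exists>h. continuous_map X euclidean h \<and>
        (\<forall>x\<in>topspace X. (\<lambda>n. \<Sum>i\<leftarrow>[0..<n]. int_multiple (z i) (a i x)) \<longlonglongrightarrow> h x)"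
  shows "\<exists>n. \<forall>x\<in>topspace X. a n x = 0"
proof (rule ccontr)
  assume "\<nexists>n. \<forall>x\<in>topspace X. a n x = 0"
  then have "\<forall>n. \<exists>x. x \<in> topspace X \<and> a n x \<noteq> 0"
    by blast
  then obtain y where y: "\<forall>n. y n \<in> topspace X \<and> a n (y n) \<noteq> 0"
    unfolding choice_iff by (elim exE)
  then have "\<forall>n. \<exists>k. int_multiple k (a n (y n)) \<notin> U"
    using no_small_subgroup_imp_int_multiple_notin[OF U(3)] by blast
  then obtain m where m: "\<forall>n. int_multiple (m n) (a n (y n)) \<notin> U"
    unfolding choice_iff by (elim exE)
  define g where "g n x = int_multiple (m n) (a n x)" for n x
  have "\<exists>n. \<forall>x\<in>topspace X. g n x \<in> U"
  proof (rule pseudocompact_subseries_convergent_imp_small_term[OF cr pc _ _ _ U(1,2)])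
    show "continuous_map X euclidean (g n)" for n
      unfolding g_def by (rule continuous_map_int_multiple[OF cont])
  next
    fix x assume "x \<in> topspace X"
    have "\<exists>N. \<forall>n\<ge>N. a n x = 0"
    proof (rule NSS_multiples_summable_imp_eventually_zero[OF U])
      fix z
      obtain h where "\<forall>x\<in>topspace X. (\<lambda>n. \<Sum>i\<leftarrow>[0..<n]. int_multiple (z i) (a i x)) \<longlonglongrightarrow> h x"
        using summable by blast
      then show "\<exists>s. (\<lambda>n. \<Sum>i\<leftarrow>[0..<n]. int_multiple (z i) (a i x)) \<longlonglongrightarrow> s"
        using \<open>x \<in> topspace X\<close> by blast
    qed
    then obtain N where "\<forall>n\<ge>N. a n x = 0"
      by (elim exE)
    then show "\<exists>N. \<forall>n\<ge>N. g n x = 0"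
      unfolding g_def by (intro exI[of _ N]) simp
  next
    fix J :: "nat set"
    have "int_multiple (if i \<in> J then m i else 0) (a i x) = (if i \<in> J then g i x else 0)" for i x
      by (simp add: g_def)
    then show "\<exists>h. continuous_map X euclidean h \<and>
        (\<forall>x\<in>topspace X. (\<lambda>n. \<Sum>i\<leftarrow>[0..<n]. if i \<in> J then g i x else 0) \<longlonglongrightarrow> h x)"
      using summable[of "\<lambda>i. if i \<in> J then m i else 0"] by simp
  qed
  then show False
    using y m unfolding g_def by blast
qed

lemma Cp_partial_prod_apply:
  fixes a :: "nat \<Rightarrow> 'a \<Rightarrow> 'g::group_add"
  assumes "x \<in> topspace X"
  shows "partial_prod (Cp_mul X) (Cp_inv X) (Cp_one X) a z n x = partial_prod (+) uminus 0 (\<lambda>i. a i x) z n"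
proof -
  have "((\<lambda>f. Cp_mul X f c) ^^ k) (Cp_one X) x = ((\<lambda>y. y + c x) ^^ k) 0" for c :: "'a \<Rightarrow> 'g" and k
    by (induction k) (simp_all add: Cp_mul_def Cp_one_def assms)
  then have "gzpow (Cp_mul X) (Cp_inv X) (Cp_one X) f k x = gzpow (+) uminus 0 (f x) k" for f :: "'a \<Rightarrow> 'g" and k
    by (simp add: gzpow_def Cp_inv_def assms)
  then show ?thesis
    by (induction n) (simp_all add: Cp_mul_def assms)
qed

lemma absolutely_productive_Cp_imp_summable:
  fixes A :: "('a \<Rightarrow> 'g::topological_group_add) set"
  assumes "absolutely_productive (Cp_top X) (Cp_mul X) (Cp_inv X) (Cp_one X) A"
    and "inj a" "range a \<subseteq> A"
  shows "\<exists>h. continuous_map X euclidean h \<and>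
    (\<forall>x\<in>topspace X. (\<lambda>n. \<Sum>i\<leftarrow>[0..<n]. int_multiple (z i) (a i x)) \<longlonglongrightarrow> h x)"
proof -
  obtain h where "limitin (Cp_top X) (partial_prod (Cp_mul X) (Cp_inv X) (Cp_one X) a z) h sequentially"
    using assms unfolding absolutely_productive_def by blast
  then have h: "h \<in> Cp_carrier X"
    "limitin (product_topology (\<lambda>_. euclidean) (topspace X))
       (partial_prod (Cp_mul X) (Cp_inv X) (Cp_one X) a z) h sequentially"
    unfolding Cp_top_def limitin_subtopology by auto
  have "(\<lambda>n. \<Sum>i\<leftarrow>[0..<n]. int_multiple (z i) (a i x)) \<longlonglongrightarrow> h x" if "x \<in> topspace X" for x
  proof (rule LIMSEQ_imp_Suc)
    have "limitin euclidean (\<lambda>n. partial_prod (Cp_mul X) (Cp_inv X) (Cp_one X) a z n x) (h x) sequentially"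
      using h(2) that unfolding limitin_componentwise by blast
    then show "(\<lambda>n. \<Sum>i\<leftarrow>[0..<Suc n]. int_multiple (z i) (a i x)) \<longlonglongrightarrow> h x"
      using that by (simp add: Cp_partial_prod_apply partial_prod_add_eq_sum_list)
  qed
  moreover have "continuous_map X euclidean h"
    using h(1) by (simp add: Cp_carrier_def)
  ultimately show ?thesis
    by blast
qed

lemma Cp_carrier_eq_Cp_one:
  assumes "f \<in> Cp_carrier X" and "\<forall>x\<in>topspace X. f x = 0"
  shows "f = Cp_one X"
  using assms unfolding Cp_carrier_def Cp_one_def extensional_def by fastforce

theorem theorem6p3:
  fixes X :: "'a topology"
  assumes "topspace X \<noteq> {}"
    and "tychonoff_space X"
    and "pseudocompact X"
    and "NSS TYPE('g::{topological_group_add,t2_space})"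
  shows "TAP (Cp_top X :: ('a \<Rightarrow> 'g) topology) (Cp_mul X) (Cp_inv X) (Cp_one X)"
  unfolding TAP_def
proof (intro allI impI)
  fix A :: "('a \<Rightarrow> 'g) set"
  assume A: "A \<subseteq> topspace (Cp_top X) \<and> absolutely_productive (Cp_top X) (Cp_mul X) (Cp_inv X) (Cp_one X) A"
  have cr: "completely_regular_space X"
    using assms(2) by (simp add: tychonoff_space_def)
  obtain U :: "'g set" where U: "open U" "0 \<in> U" "\<forall>S. is_add_subgroup S \<and> S \<subseteq> U \<longrightarrow> S = {0}"
    using assms(4) unfolding NSS_def by blast
  show "finite A"
  proof (rule ccontr)
    assume "infinite A"
    then have "infinite (A - {Cp_one X})"
      by simp
    then obtain a :: "nat \<Rightarrow> 'a \<Rightarrow> 'g" where a: "inj a" "range a \<subseteq> A - {Cp_one X}"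
      by (metis infinite_countable_subset)
    have carrier: "a n \<in> Cp_carrier X" for n
      using A a(2) unfolding Cp_top_def by auto
    then have cont: "continuous_map X euclidean (a n)" for n
      by (simp add: Cp_carrier_def)
    have summable: "\<exists>h. continuous_map X euclidean h \<and>
        (\<forall>x\<in>topspace X. (\<lambda>n. \<Sum>i\<leftarrow>[0..<n]. int_multiple (z i) (a i x)) \<longlonglongrightarrow> h x)" for z
      by (rule absolutely_productive_Cp_imp_summable[of X A a]) (use A a in auto)
    obtain n where "\<forall>x\<in>topspace X. a n x = 0"
      using pseudocompact_NSS_summable_multiples_has_zero_term[OF cr assms(3) U cont summable]
      by (elim exE)
    then show False
      using Cp_carrier_eq_Cp_one[OF carrier] a(2) by blast
  qed
qed

end
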